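(* The characters (non-zero complex homomorphisms, not necessarily continuous) of $C(X)'_{00}$ are, without multiple occurrences, the following, where $\sum_kf_k\delta^k\in C(X)'_{00}$: (i) for $x\notin\bigcup_{q\ge1}\mathrm{Fix}_q(\sigma)^\circ$: $\omega_x\big(\sum_kf_k\delta^k\big)=f_0(x)$; (ii) for $x\in\bigcup_{q\ge1}\mathrm{Fix}_q(\sigma)^\circ$ and $c\in\mathbb{C}\setminus\{0\}$: $\omega_{x,c}\big(\sum_kf_k\delta^k\big)=\sum_jf_{jn}(x)c^j$, where $n$ is the minimal $n\ge1$ such that $x\in\mathrm{Fix}_n(\sigma)^\circ$.
   Context: Let $X$ be a non-empty compact Hausdorff space and $\sigma:X\to X$ a homeomorphism; $\mathrm{Fix}_k(\sigma)=\{x:\sigma^kx=x\}$, superscript $\circ$ denotes interior, $\mathrm{supp}(f)$ the closure of $\{f\ne0\}$. $C(X)$ is the algebra of continuous complex functions. $c_{00}(\Sigma)$ is the unital algebra of finite formal sums $\sum_kf_k\delta^k$ ($f_k\in C(X)$) with multiplication determined by $f\delta^k\cdot g\delta^l=f\,(g\circ\sigma^{-k})\,\delta^{k+l}$; $C(X)$ is embedded as $\{f\delta^0\}$. $C(X)'_{00}$ is the commutant of $C(X)$ in $c_{00}(\Sigma)$; it equals $\{\sum_kf_k\delta^k:\mathrm{supp}(f_k)\subset\mathrm{Fix}_k(\sigma)\ \forall k\}$ and is commutative. *)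

theory Defs
  imports "HOL-Analysis.Analysis"
begin

text \<open>Elements of c00(Sigma): finite formal sums sum_k f_k delta^k, represented by
  coefficient families F :: int => X => complex (F k = f_k) with finite support
  and continuous coefficients.\<close>

definition zpow :: "('a \<Rightarrow> 'a) \<Rightarrow> int \<Rightarrow> 'a \<Rightarrow> 'a" where
  "zpow \<sigma> k = (if 0 \<le> k then \<sigma> ^^ nat k else (inv \<sigma>) ^^ nat (- k))"

definition c00 :: "(int \<Rightarrow> 'a::topological_space \<Rightarrow> complex) set" where
  "c00 = {F. finite {k. F k \<noteq> (\<lambda>x. 0)} \<and> (\<forall>k. continuous_on UNIV (F k))}"

text \<open>Multiplication determined by  f delta^k * g delta^l = f (g o sigma^(-k)) delta^(k+l).\<close>
definition cmult :: "('a \<Rightarrow> 'a) \<Rightarrow> (int \<Rightarrow> 'a \<Rightarrow> complex) \<Rightarrow> (int \<Rightarrow> 'a \<Rightarrow> complex)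
    \<Rightarrow> (int \<Rightarrow> 'a \<Rightarrow> complex)" where
  "cmult \<sigma> F G = (\<lambda>m x. \<Sum>k\<in>{k. F k \<noteq> (\<lambda>x. 0)}. F k x * G (m - k) (zpow \<sigma> (- k) x))"

definition embed0 :: "('a \<Rightarrow> complex) \<Rightarrow> (int \<Rightarrow> 'a \<Rightarrow> complex)" where
  "embed0 f = (\<lambda>k. if k = 0 then f else (\<lambda>x. 0))"

definition commutant00 :: "('a::topological_space \<Rightarrow> 'a) \<Rightarrow> (int \<Rightarrow> 'a \<Rightarrow> complex) set" where
  "commutant00 \<sigma> = {F \<in> c00. \<forall>f. continuous_on UNIV f \<longrightarrow>
      cmult \<sigma> F (embed0 f) = cmult \<sigma> (embed0 f) F}"

definition is_character :: "('a::topological_space \<Rightarrow> 'a) \<Rightarrow> ((int \<Rightarrow> 'a \<Rightarrow> complex) \<Rightarrow> complex) \<Rightarrow> bool" where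
  "is_character \<sigma> \<omega> \<longleftrightarrow>
     (\<forall>F\<in>commutant00 \<sigma>. \<forall>G\<in>commutant00 \<sigma>.
        \<omega> (\<lambda>k x. F k x + G k x) = \<omega> F + \<omega> G \<and> \<omega> (cmult \<sigma> F G) = \<omega> F * \<omega> G) \<and>
     (\<forall>F\<in>commutant00 \<sigma>. \<forall>a::complex. \<omega> (\<lambda>k x. a * F k x) = a * \<omega> F) \<and>
     (\<exists>F\<in>commutant00 \<sigma>. \<omega> F \<noteq> 0)"

definition Fix :: "('a \<Rightarrow> 'a) \<Rightarrow> nat \<Rightarrow> 'a set" where
  "Fix \<sigma> k = {x. (\<sigma> ^^ k) x = x}"

definition Uper :: "('a::topological_space \<Rightarrow> 'a) \<Rightarrow> 'a set" where
  "Uper \<sigma> = (\<Union>q\<in>{1..}. interior (Fix \<sigma> q))"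

definition minper :: "('a::topological_space \<Rightarrow> 'a) \<Rightarrow> 'a \<Rightarrow> nat" where
  "minper \<sigma> x = (LEAST n. 1 \<le> n \<and> x \<in> interior (Fix \<sigma> n))"

definition omega1 :: "'a \<Rightarrow> (int \<Rightarrow> 'a \<Rightarrow> complex) \<Rightarrow> complex" where
  "omega1 x F = F 0 x"

definition omega2 :: "('a::topological_space \<Rightarrow> 'a) \<Rightarrow> 'a \<Rightarrow> complex \<Rightarrow> (int \<Rightarrow> 'a \<Rightarrow> complex) \<Rightarrow> complex" where
  "omega2 \<sigma> x c F = (\<Sum>j\<in>{j. F (j * int (minper \<sigma> x)) \<noteq> (\<lambda>y. 0)}. F (j * int (minper \<sigma> x)) x * c powi j)"

end

theory Submission
  imports Defs
begin

text \<open>An element of the commutant is a finite sum of terms f_k \<delta>^k with f_k vanishing off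
  Fix_k. Restricted to C(X), a character \<omega> is a unital multiplicative functional, hence by
  compactness the evaluation at some point x, and a term whose coefficient vanishes at x is
  killed by \<omega>. If x lies in the interior of no Fix_q, every f_k with k \<noteq> 0 vanishes at x and
  \<omega> = \<omega>_x. Otherwise, with n the minimal period, f_k(x) \<noteq> 0 forces n | k, and a bump \<phi> with
  \<phi>(x) = 1 supported in the interior of Fix_n gives \<omega>(f_jn \<delta>^(jn)) = f_jn(x) \<omega>(\<phi> \<delta>^n)^j,
  i.e. \<omega> = \<omega>_(x,c) with c = \<omega>(\<phi> \<delta>^n) \<noteq> 0. Conversely, at such an x the product in the
  commutant becomes the convolution of the sequences j \<mapsto> f_jn(x), so these formulas are
  characters; they are pairwise distinct because C(X) separates points and \<phi> \<delta>^n recovers c.\<close>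

section \<open>Topological preliminaries\<close>

lemma Hausdorff_space_euclidean_t2: "Hausdorff_space (euclidean :: 'a::t2_space topology)"
  unfolding Hausdorff_space_def disjnt_def using hausdorff by auto

lemma compact_t2_completely_regular:
  assumes "compact (UNIV :: 'a::t2_space set)"
  shows "completely_regular_space (euclidean :: 'a topology)"
proof -
  have "compact_space (euclidean :: 'a topology)"
    using assms by (simp add: compact_space_def)
  then have "normal_space (euclidean :: 'a topology)"
    using Hausdorff_space_euclidean_t2 compact_Hausdorff_or_regular_imp_normal_space by blast
  then show ?thesis
    using Hausdorff_space_euclidean_t2 normal_imp_completely_regular_space by blast
qed

lemma completely_regular_bump:
  fixes x :: "'a::topological_space"
  assumes "completely_regular_space (euclidean :: 'a topology)" "open U" "x \<in> U"
  obtains \<phi> :: "'a \<Rightarrow> complex"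
  where "continuous_on UNIV \<phi>" "\<phi> x = 1" "\<And>y. y \<notin> U \<Longrightarrow> \<phi> y = 0"
proof -
  obtain f :: "'a \<Rightarrow> real"
    where f: "continuous_map euclidean euclideanreal f" "f x = 0" "f ` (UNIV - U) \<subseteq> {1}"
    using assms(1)[unfolded completely_regular_space_alt', rule_format, of U x] assms(2,3) by auto
  have "continuous_on UNIV (\<lambda>y. complex_of_real (1 - f y))"
    using f(1) by (intro continuous_intros) simp
  with f(2,3) show ?thesis by (intro that[of "\<lambda>y. complex_of_real (1 - f y)"]) auto
qed

lemma completely_regular_separating:
  fixes x y :: "'a::t1_space"
  assumes "completely_regular_space (euclidean :: 'a topology)" "x \<noteq> y"
  obtains f :: "'a \<Rightarrow> complex" where "continuous_on UNIV f" "f x \<noteq> f y"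
proof -
  have U: "open (- {y})" "x \<in> - {y}" using assms(2) by (auto simp: open_Compl)
  obtain \<phi> :: "'a \<Rightarrow> complex"
    where "continuous_on UNIV \<phi>" "\<phi> x = 1" "\<And>z. z \<notin> - {y} \<Longrightarrow> \<phi> z = 0"
    using completely_regular_bump[OF assms(1) U] by blast
  then show ?thesis by (intro that[of \<phi>]) auto
qed

lemma sum_mult_cnj_eq_0_iff:
  assumes "finite T"
  shows "(\<Sum>i\<in>T. z i * cnj (z i)) = 0 \<longleftrightarrow> (\<forall>i\<in>T. z i = 0)"
proof -
  have "(\<Sum>i\<in>T. z i * cnj (z i)) = complex_of_real (\<Sum>i\<in>T. (cmod (z i))\<^sup>2)"
    unfolding of_real_sum by (intro sum.cong refl) (metis complex_norm_square)
  moreover have "(\<Sum>i\<in>T. (cmod (z i))\<^sup>2) = 0 \<longleftrightarrow> (\<forall>i\<in>T. z i = 0)"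
    using assms by (simp add: sum_nonneg_eq_0_iff)
  ultimately show ?thesis by (metis of_real_eq_0_iff)
qed

lemma unital_multiplicative_functional_common_zero:
  fixes \<phi> :: "('a::topological_space \<Rightarrow> complex) \<Rightarrow> complex"
  assumes compact: "compact (UNIV :: 'a set)"
    and add: "\<And>f g. continuous_on UNIV f \<Longrightarrow> continuous_on UNIV g \<Longrightarrow>
                \<phi> (\<lambda>y. f y + g y) = \<phi> f + \<phi> g"
    and scale: "\<And>a f. continuous_on UNIV f \<Longrightarrow> \<phi> (\<lambda>y. a * f y) = a * \<phi> f"
    and mult: "\<And>f g. continuous_on UNIV f \<Longrightarrow> continuous_on UNIV g \<Longrightarrow>
                \<phi> (\<lambda>y. f y * g y) = \<phi> f * \<phi> g"
    and one: "\<phi> (\<lambda>y. 1) = 1"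
  obtains x where "\<And>g. continuous_on UNIV g \<Longrightarrow> \<phi> g = 0 \<Longrightarrow> g x = 0"
proof -
  have sum: "\<phi> (\<lambda>y. \<Sum>i\<in>S. u i y) = (\<Sum>i\<in>S. \<phi> (u i))"
    if "finite S" "\<forall>i\<in>S. continuous_on UNIV (u i)" for S :: "'b set" and u
    using that
  proof (induction S rule: finite_induct)
    case empty
    show ?case using scale[of "\<lambda>y. 1" 0] by simp
  next
    case (insert i S)
    then show ?case by (simp add: add continuous_on_sum)
  qed
  have "\<exists>x. \<forall>g. continuous_on UNIV g \<and> \<phi> g = 0 \<longrightarrow> g x = 0"
  proof (rule ccontr)
    assume "\<nexists>x. \<forall>g. continuous_on UNIV g \<and> \<phi> g = 0 \<longrightarrow> g x = 0"
    then obtain g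
      where g: "\<And>x. continuous_on UNIV (g x)" "\<And>x. \<phi> (g x) = 0" "\<And>x. g x x \<noteq> 0"
      by metis
    have "open {y. g x y \<noteq> 0}" for x
      using open_Collect_neq[OF g(1)[of x] continuous_on_const[of UNIV 0]] by simp
    moreover have "UNIV \<subseteq> (\<Union>x\<in>UNIV. {y. g x y \<noteq> 0})" using g(3) by auto
    ultimately obtain T where T: "finite T" "UNIV \<subseteq> (\<Union>x\<in>T. {y. g x y \<noteq> 0})"
      by (rule compactE_image[OF compact]) auto
    define h where "h y = (\<Sum>x\<in>T. g x y * cnj (g x y))" for y
    have h_cont: "continuous_on UNIV h"
      unfolding h_def using g(1) by (intro continuous_intros)
    have "\<phi> h = (\<Sum>x\<in>T. \<phi> (\<lambda>y. g x y * cnj (g x y)))"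
      unfolding h_def using T(1) g(1) by (intro sum) (auto intro!: continuous_intros)
    also have "\<dots> = 0"
      using mult[OF g(1) continuous_on_cnj[OF g(1)]] g(2) by (intro sum.neutral) simp
    finally have "\<phi> h = 0" .
    moreover have h_nonzero: "h y \<noteq> 0" for y
      using T sum_mult_cnj_eq_0_iff[OF T(1), of "\<lambda>x. g x y"] by (auto simp: h_def)
    then have inverse_cont: "continuous_on UNIV (\<lambda>y. 1 / h y)"
      using h_cont by (intro continuous_intros) auto
    have "(\<lambda>y. h y * (1 / h y)) = (\<lambda>y. 1)" using h_nonzero by auto
    then have "\<phi> h * \<phi> (\<lambda>y. 1 / h y) = 1" using mult[OF h_cont inverse_cont] one by simp
    ultimately show False by simp
  qed
  then show ?thesis using that by blast
qed

lemma unital_multiplicative_functional_is_evaluation: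
  fixes \<phi> :: "('a::topological_space \<Rightarrow> complex) \<Rightarrow> complex"
  assumes compact: "compact (UNIV :: 'a set)"
    and add: "\<And>f g. continuous_on UNIV f \<Longrightarrow> continuous_on UNIV g \<Longrightarrow>
                \<phi> (\<lambda>y. f y + g y) = \<phi> f + \<phi> g"
    and scale: "\<And>a f. continuous_on UNIV f \<Longrightarrow> \<phi> (\<lambda>y. a * f y) = a * \<phi> f"
    and mult: "\<And>f g. continuous_on UNIV f \<Longrightarrow> continuous_on UNIV g \<Longrightarrow>
                \<phi> (\<lambda>y. f y * g y) = \<phi> f * \<phi> g"
    and one: "\<phi> (\<lambda>y. 1) = 1"
  obtains x where "\<And>f. continuous_on UNIV f \<Longrightarrow> \<phi> f = f x"
proof -
  obtain x where common_zero: "\<And>g. continuous_on UNIV g \<Longrightarrow> \<phi> g = 0 \<Longrightarrow> g x = 0"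
    using unital_multiplicative_functional_common_zero[where \<phi> = \<phi>, OF assms] by blast
  have "\<phi> f = f x" if f: "continuous_on UNIV f" for f
  proof -
    have "\<phi> (\<lambda>y. f y + (- \<phi> f) * 1) = 0"
      using add[OF f, of "\<lambda>y. - \<phi> f * 1"] scale[of "\<lambda>y. 1" "- \<phi> f"] one by simp
    moreover have "continuous_on UNIV (\<lambda>y. f y + (- \<phi> f) * 1)" by (intro continuous_intros f)
    ultimately show ?thesis using common_zero by fastforce
  qed
  then show ?thesis by (rule that)
qed

lemma continuous_on_divide_sqrt_norm:
  fixes \<psi> :: "'a::t2_space \<Rightarrow> complex"
  assumes "continuous_on UNIV \<psi>"
  shows "continuous_on UNIV (\<lambda>y. \<psi> y / complex_of_real (sqrt (cmod (\<psi> y))))"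
proof -
  let ?g = "\<lambda>y. complex_of_real (sqrt (cmod (\<psi> y)))"
  have \<psi>_cont: "isCont \<psi> z" for z
    using assms continuous_on_eq_continuous_at[OF open_UNIV] by blast
  have "isCont (\<lambda>y. \<psi> y / ?g y) z" for z
  proof (cases "\<psi> z = 0")
    case False
    have "isCont ?g z" using \<psi>_cont by (intro continuous_intros)
    moreover have "?g z \<noteq> 0" using False by simp
    ultimately show ?thesis using \<psi>_cont by (intro continuous_intros) auto
  next
    case True
    have norm_eq: "norm (\<psi> y / ?g y) = sqrt (cmod (\<psi> y))" for y
    proof (cases "\<psi> y = 0")
      case False
      have "cmod (\<psi> y) = sqrt (cmod (\<psi> y)) * sqrt (cmod (\<psi> y))" by simp
      then show ?thesis using False by (simp add: norm_divide field_simps)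
    qed simp
    have "((\<lambda>y. sqrt (cmod (\<psi> y))) \<longlongrightarrow> sqrt (cmod (\<psi> z))) (at z)"
      using \<psi>_cont unfolding isCont_def by (intro tendsto_intros)
    then have "((\<lambda>y. norm (\<psi> y / ?g y)) \<longlongrightarrow> 0) (at z)" using True norm_eq by simp
    then have "((\<lambda>y. \<psi> y / ?g y) \<longlongrightarrow> 0) (at z)" by (rule tendsto_norm_zero_cancel)
    then show ?thesis using True unfolding isCont_def by simp
  qed
  then show ?thesis using continuous_on_eq_continuous_at[OF open_UNIV] by blast
qed

lemma zpow_0 [simp]: "zpow \<sigma> 0 = id"
  by (simp add: zpow_def)

lemma zpow_neg_fixed_iff:
  assumes "bij \<sigma>"
  shows "zpow \<sigma> (- k) y = y \<longleftrightarrow> (\<sigma> ^^ nat \<bar>k\<bar>) y = y"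
proof (cases "0 \<le> k")
  case True
  have "zpow \<sigma> (- k) = inv \<sigma> ^^ nat k" using True by (auto simp: zpow_def)
  also have "\<dots> = inv (\<sigma> ^^ nat k)" by (rule inv_fn[OF assms, symmetric])
  finally have "zpow \<sigma> (- k) y = y \<longleftrightarrow> y = inv (\<sigma> ^^ nat k) y" by auto
  also have "\<dots> \<longleftrightarrow> (\<sigma> ^^ nat k) y = y" by (rule bij_inv_eq_iff) (simp add: assms)
  finally show ?thesis using True by simp
next
  case False
  then show ?thesis by (simp add: zpow_def)
qed

lemma funpow_fixed_mult:
  assumes "(f ^^ n) y = y"
  shows "(f ^^ (n * j)) y = y"
proof -
  have "((f ^^ n) ^^ j) y = y" by (induction j) (simp_all add: assms)
  then show ?thesis by (simp add: funpow_mult)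
qed

lemma funpow_fixed_gcd:
  assumes "(f ^^ a) y = y" "(f ^^ b) y = y" "a \<noteq> 0"
  shows "(f ^^ gcd a b) y = y"
proof -
  obtain u v where uv: "a * u = b * v + gcd a b" using bezout_nat[OF assms(3)] by blast
  have "y = (f ^^ (a * u)) y" using funpow_fixed_mult[OF assms(1)] by simp
  also have "\<dots> = (f ^^ gcd a b) ((f ^^ (b * v)) y)" by (simp add: uv funpow_add add.commute)
  also have "\<dots> = (f ^^ gcd a b) y" using funpow_fixed_mult[OF assms(2)] by simp
  finally show ?thesis ..
qed

lemma zpow_neg_fixed_mult:
  assumes "bij \<sigma>" "(\<sigma> ^^ n) y = y"
  shows "zpow \<sigma> (- (j * int n)) y = y"
proof -
  have "nat \<bar>j * int n\<bar> = n * nat \<bar>j\<bar>" by (simp add: abs_mult nat_mult_distrib)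
  then show ?thesis using zpow_neg_fixed_iff[OF assms(1)] funpow_fixed_mult[OF assms(2)] by simp
qed

section \<open>Single terms and the commutant\<close>

definition coeff_supp :: "(int \<Rightarrow> 'a \<Rightarrow> complex) \<Rightarrow> int set" where
  "coeff_supp F = {k. F k \<noteq> (\<lambda>x. 0)}"

definition single_term :: "int \<Rightarrow> ('a \<Rightarrow> complex) \<Rightarrow> int \<Rightarrow> 'a \<Rightarrow> complex" where
  "single_term k \<psi> = (\<lambda>m. if m = k then \<psi> else (\<lambda>y. 0))"

lemma embed0_eq_single_term: "embed0 f = single_term 0 f"
  unfolding embed0_def single_term_def by auto

lemma coeff_supp_single_term: "coeff_supp (single_term k \<psi>) = (if \<psi> = (\<lambda>x. 0) then {} else {k})"
  unfolding coeff_supp_def single_term_def by auto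

lemma cmult_single_term_left:
  "cmult \<sigma> (single_term k \<psi>) G m y = \<psi> y * G (m - k) (zpow \<sigma> (- k) y)"
  unfolding cmult_def coeff_supp_def[symmetric] coeff_supp_single_term
  by (cases "\<psi> = (\<lambda>x. 0)") (auto simp: single_term_def)

lemma cmult_single_term_right:
  assumes "finite (coeff_supp F)"
  shows "cmult \<sigma> F (single_term l g) m y = F (m - l) y * g (zpow \<sigma> (- (m - l)) y)"
proof -
  have "cmult \<sigma> F (single_term l g) m y
      = (\<Sum>k\<in>coeff_supp F. if k = m - l then F k y * g (zpow \<sigma> (- k) y) else 0)"
    unfolding cmult_def coeff_supp_def[symmetric] by (intro sum.cong) (auto simp: single_term_def)
  also have "\<dots> = F (m - l) y * g (zpow \<sigma> (- (m - l)) y)"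
    using assms by (simp add: sum.delta') (auto simp: coeff_supp_def)
  finally show ?thesis .
qed

lemma cmult_single_terms:
  "cmult \<sigma> (single_term k u) (single_term l v) = single_term (k + l) (\<lambda>y. u y * v (zpow \<sigma> (- k) y))"
  by (intro ext, subst cmult_single_term_left) (auto simp: single_term_def)

lemma cmult_embed0_single_term:
  "cmult \<sigma> (embed0 f) (single_term k u) = single_term k (\<lambda>y. f y * u y)"
  by (simp add: embed0_eq_single_term cmult_single_terms)

lemma c00_finite_coeff_supp: "F \<in> c00 \<Longrightarrow> finite (coeff_supp F)"
  unfolding c00_def coeff_supp_def by auto

lemma c00_continuous: "F \<in> c00 \<Longrightarrow> continuous_on UNIV (F k)"
  unfolding c00_def by auto

lemma single_term_in_c00_iff: "single_term k \<psi> \<in> c00 \<longleftrightarrow> continuous_on UNIV \<psi>"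
proof -
  have "{m. single_term k \<psi> m \<noteq> (\<lambda>x. 0)} \<subseteq> {k}" by (auto simp: single_term_def)
  then have "finite {m. single_term k \<psi> m \<noteq> (\<lambda>x. 0)}" by (rule finite_subset) simp
  then show ?thesis unfolding c00_def by (auto simp: single_term_def)
qed

lemma c00_scaleC:
  assumes "F \<in> c00"
  shows "(\<lambda>k x. a * F k x) \<in> c00"
proof -
  have "{k. (\<lambda>x. a * F k x) \<noteq> (\<lambda>x. 0)} \<subseteq> coeff_supp F" unfolding coeff_supp_def by auto
  then show ?thesis
    using assms c00_finite_coeff_supp[OF assms] finite_subset
    unfolding c00_def by (auto intro: continuous_intros)
qed

lemma c00_add:
  assumes "F \<in> c00" "G \<in> c00"
  shows "(\<lambda>k x. F k x + G k x) \<in> c00"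
proof -
  have "{k. (\<lambda>x. F k x + G k x) \<noteq> (\<lambda>x. 0)} \<subseteq> coeff_supp F \<union> coeff_supp G"
    unfolding coeff_supp_def by auto
  then have "finite {k. (\<lambda>x. F k x + G k x) \<noteq> (\<lambda>x. 0)}"
    by (rule finite_subset) (simp add: assms c00_finite_coeff_supp)
  moreover have "continuous_on UNIV (\<lambda>x. F k x + G k x)" for k
    using assms by (intro continuous_intros c00_continuous)
  ultimately show ?thesis unfolding c00_def by blast
qed

lemma c00_eq_sum_single_terms:
  assumes "F \<in> c00"
  shows "F = (\<lambda>m x. \<Sum>k\<in>coeff_supp F. single_term k (F k) m x)"
proof (intro ext)
  fix m x
  have "(\<Sum>k\<in>coeff_supp F. single_term k (F k) m x) = (\<Sum>k\<in>coeff_supp F. if k = m then F m x else 0)"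
    by (intro sum.cong) (auto simp: single_term_def)
  also have "\<dots> = F m x"
    using c00_finite_coeff_supp[OF assms] by (simp add: sum.delta) (auto simp: coeff_supp_def)
  finally show "F m x = (\<Sum>k\<in>coeff_supp F. single_term k (F k) m x)" ..
qed

context
  fixes \<sigma> :: "'a::t2_space \<Rightarrow> 'a"
  assumes creg: "completely_regular_space (euclidean :: 'a topology)"
begin

text \<open>Commuting with f \<delta>^0 means F k y * f (\<sigma>^-k y) = f y * F k y; since continuous functions
  separate points, this is the fixed-point condition.\<close>
lemma commutant00_iff:
  "F \<in> commutant00 \<sigma> \<longleftrightarrow> F \<in> c00 \<and> (\<forall>k y. F k y \<noteq> 0 \<longrightarrow> zpow \<sigma> (- k) y = y)"
proof (cases "F \<in> c00")
  case True
  have commutes_iff: "cmult \<sigma> F (embed0 f) = cmult \<sigma> (embed0 f) F \<longleftrightarrow>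
      (\<forall>m y. F m y * f (zpow \<sigma> (- m) y) = f y * F m y)" for f
    by (simp add: fun_eq_iff embed0_eq_single_term cmult_single_term_left
        cmult_single_term_right[OF c00_finite_coeff_supp[OF True]])
  have "(\<forall>f. continuous_on UNIV f \<longrightarrow> (\<forall>m y. F m y * f (zpow \<sigma> (- m) y) = f y * F m y))
      \<longleftrightarrow> (\<forall>k y. F k y \<noteq> 0 \<longrightarrow> zpow \<sigma> (- k) y = y)"
  proof safe
    fix k y
    assume commutes: "\<forall>f. continuous_on UNIV f \<longrightarrow> (\<forall>m y. F m y * f (zpow \<sigma> (- m) y) = f y * F m y)"
      and "F k y \<noteq> 0"
    show "zpow \<sigma> (- k) y = y"
    proof (rule ccontr)
      assume "zpow \<sigma> (- k) y \<noteq> y"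
      then obtain f :: "'a \<Rightarrow> complex" where "continuous_on UNIV f" "f (zpow \<sigma> (- k) y) \<noteq> f y"
        by (rule completely_regular_separating[OF creg])
      with commutes \<open>F k y \<noteq> 0\<close> show False by auto
    qed
  next
    fix f :: "'a \<Rightarrow> complex" and m y
    assume "\<forall>k y. F k y \<noteq> 0 \<longrightarrow> zpow \<sigma> (- k) y = y"
    then show "F m y * f (zpow \<sigma> (- m) y) = f y * F m y" by (cases "F m y = 0") auto
  qed
  then show ?thesis unfolding commutant00_def using True commutes_iff by auto
qed (simp add: commutant00_def)

lemma commutant00_in_c00: "F \<in> commutant00 \<sigma> \<Longrightarrow> F \<in> c00"
  by (simp add: commutant00_iff)

lemma commutant00_fixed: "F \<in> commutant00 \<sigma> \<Longrightarrow> F k y \<noteq> 0 \<Longrightarrow> zpow \<sigma> (- k) y = y"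
  by (simp add: commutant00_iff)

lemma single_term_in_commutant00_iff:
  "single_term k \<psi> \<in> commutant00 \<sigma> \<longleftrightarrow>
     continuous_on UNIV \<psi> \<and> (\<forall>y. \<psi> y \<noteq> 0 \<longrightarrow> zpow \<sigma> (- k) y = y)"
  unfolding commutant00_iff single_term_in_c00_iff by (auto simp: single_term_def)

lemma embed0_in_commutant00: "continuous_on UNIV f \<Longrightarrow> embed0 f \<in> commutant00 \<sigma>"
  by (simp add: embed0_eq_single_term single_term_in_commutant00_iff)

lemma single_term_coeff_in_commutant00:
  "F \<in> commutant00 \<sigma> \<Longrightarrow> single_term k (F k) \<in> commutant00 \<sigma>"
  by (simp add: single_term_in_commutant00_iff commutant00_fixed c00_continuous commutant00_in_c00)

lemma commutant00_zero: "(\<lambda>k x. 0) \<in> commutant00 \<sigma>"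
  unfolding commutant00_iff c00_def by simp

lemma commutant00_add:
  assumes "F \<in> commutant00 \<sigma>" "G \<in> commutant00 \<sigma>"
  shows "(\<lambda>k x. F k x + G k x) \<in> commutant00 \<sigma>"
proof -
  have "zpow \<sigma> (- k) y = y" if "F k y + G k y \<noteq> 0" for k y
    using that commutant00_fixed[OF assms(1)] commutant00_fixed[OF assms(2)] by force
  then show ?thesis
    using c00_add[OF commutant00_in_c00[OF assms(1)] commutant00_in_c00[OF assms(2)]]
    unfolding commutant00_iff by blast
qed

lemma cmult_commutant00:
  assumes "F \<in> commutant00 \<sigma>"
  shows "cmult \<sigma> F G = (\<lambda>m y. \<Sum>k\<in>coeff_supp F. F k y * G (m - k) y)"
  unfolding cmult_def coeff_supp_def[symmetric]
  by (intro ext sum.cong refl) (metis commutant00_fixed[OF assms] mult_zero_left)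

lemma cmult_commutant00_in_c00:
  assumes F: "F \<in> commutant00 \<sigma>" and G: "G \<in> commutant00 \<sigma>"
  shows "cmult \<sigma> F G \<in> c00"
proof -
  have fin: "finite (coeff_supp F)" "finite (coeff_supp G)"
    using F G by (simp_all add: c00_finite_coeff_supp commutant00_in_c00)
  have "{m. cmult \<sigma> F G m \<noteq> (\<lambda>y. 0)} \<subseteq> (\<lambda>(k, l). k + l) ` (coeff_supp F \<times> coeff_supp G)"
  proof
    fix m assume "m \<in> {m. cmult \<sigma> F G m \<noteq> (\<lambda>y. 0)}"
    then obtain y where "(\<Sum>k\<in>coeff_supp F. F k y * G (m - k) y) \<noteq> 0"
      by (auto simp: cmult_commutant00[OF F])
    then obtain k where "k \<in> coeff_supp F" "G (m - k) y \<noteq> 0"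
      by (metis (mono_tags, lifting) mult_zero_right sum.neutral)
    then show "m \<in> (\<lambda>(k, l). k + l) ` (coeff_supp F \<times> coeff_supp G)"
      by (intro image_eqI[of _ _ "(k, m - k)"]) (auto simp: coeff_supp_def)
  qed
  then have "finite {m. cmult \<sigma> F G m \<noteq> (\<lambda>y. 0)}"
    by (rule finite_subset) (use fin in auto)
  moreover have "continuous_on UNIV (cmult \<sigma> F G m)" for m
    unfolding cmult_commutant00[OF F] using F G fin
    by (intro continuous_intros c00_continuous commutant00_in_c00) auto
  ultimately show ?thesis unfolding c00_def by blast
qed

end

section \<open>Characters\<close>

lemma character_add:
  "is_character \<sigma> \<omega> \<Longrightarrow> F \<in> commutant00 \<sigma> \<Longrightarrow> G \<in> commutant00 \<sigma> \<Longrightarrow>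
     \<omega> (\<lambda>k x. F k x + G k x) = \<omega> F + \<omega> G"
  unfolding is_character_def by blast

lemma character_mult:
  "is_character \<sigma> \<omega> \<Longrightarrow> F \<in> commutant00 \<sigma> \<Longrightarrow> G \<in> commutant00 \<sigma> \<Longrightarrow>
     \<omega> (cmult \<sigma> F G) = \<omega> F * \<omega> G"
  unfolding is_character_def by blast

lemma character_scaleC:
  "is_character \<sigma> \<omega> \<Longrightarrow> F \<in> commutant00 \<sigma> \<Longrightarrow> \<omega> (\<lambda>k x. a * F k x) = a * \<omega> F"
  unfolding is_character_def by blast

context
  fixes \<sigma> :: "'a::t2_space \<Rightarrow> 'a"
  assumes creg: "completely_regular_space (euclidean :: 'a topology)"
begin

lemma commutant00_sum:
  "finite I \<Longrightarrow> (\<And>i. i \<in> I \<Longrightarrow> G i \<in> commutant00 \<sigma>) \<Longrightarrow>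
     (\<lambda>k x. \<Sum>i\<in>I. G i k x) \<in> commutant00 \<sigma>"
  by (induction I rule: finite_induct) (simp_all add: commutant00_zero[OF creg] commutant00_add[OF creg])

context
  fixes \<omega>
  assumes character: "is_character \<sigma> \<omega>"
begin

lemma character_zero: "\<omega> (\<lambda>k x. 0) = 0"
  using character_scaleC[OF character commutant00_zero[OF creg], of 0] by simp

lemma character_sum:
  "finite I \<Longrightarrow> (\<And>i. i \<in> I \<Longrightarrow> G i \<in> commutant00 \<sigma>) \<Longrightarrow>
     \<omega> (\<lambda>k x. \<Sum>i\<in>I. G i k x) = (\<Sum>i\<in>I. \<omega> (G i))"
proof (induction I rule: finite_induct)
  case (insert i I)
  then show ?case
    by (simp add: character_add[OF character] commutant00_sum)
qed (simp add: character_zero)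

lemma character_eq_sum_single_terms:
  assumes "F \<in> commutant00 \<sigma>"
  shows "\<omega> F = (\<Sum>k\<in>coeff_supp F. \<omega> (single_term k (F k)))"
proof -
  have "\<omega> F = \<omega> (\<lambda>m x. \<Sum>k\<in>coeff_supp F. single_term k (F k) m x)"
    using c00_eq_sum_single_terms[OF commutant00_in_c00[OF creg assms]] by simp
  also have "\<dots> = (\<Sum>k\<in>coeff_supp F. \<omega> (single_term k (F k)))"
    using assms by (intro character_sum single_term_coeff_in_commutant00[OF creg])
      (simp_all add: c00_finite_coeff_supp commutant00_in_c00[OF creg])
  finally show ?thesis .
qed

lemma character_one: "\<omega> (embed0 (\<lambda>y. 1)) = 1"
proof -
  obtain F where F: "F \<in> commutant00 \<sigma>" "\<omega> F \<noteq> 0"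
    using character unfolding is_character_def by blast
  have "cmult \<sigma> F (embed0 (\<lambda>y. 1)) = F"
    using c00_finite_coeff_supp[OF commutant00_in_c00[OF creg F(1)]]
    by (simp add: fun_eq_iff embed0_eq_single_term cmult_single_term_right)
  then have "\<omega> F = \<omega> F * \<omega> (embed0 (\<lambda>y. 1))"
    using character_mult[OF character F(1) embed0_in_commutant00[OF creg continuous_on_const[of UNIV 1]]]
    by simp
  then show ?thesis using F(2) by simp
qed

lemma character_embed0_evaluation:
  assumes "compact (UNIV :: 'a set)"
  obtains x where "\<And>f. continuous_on UNIV f \<Longrightarrow> \<omega> (embed0 f) = f x"
proof (rule unital_multiplicative_functional_is_evaluation[OF assms, of "\<lambda>f. \<omega> (embed0 f)"])
  fix f g :: "'a \<Rightarrow> complex"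
  assume f: "continuous_on UNIV f" and g: "continuous_on UNIV g"
  have "embed0 (\<lambda>y. f y + g y) = (\<lambda>k x. embed0 f k x + embed0 g k x)"
    by (auto simp: embed0_def)
  then show "\<omega> (embed0 (\<lambda>y. f y + g y)) = \<omega> (embed0 f) + \<omega> (embed0 g)"
    using character_add[OF character embed0_in_commutant00[OF creg f] embed0_in_commutant00[OF creg g]]
    by simp
  have "cmult \<sigma> (embed0 f) (embed0 g) = embed0 (\<lambda>y. f y * g y)"
    by (simp add: cmult_single_terms embed0_eq_single_term)
  then show "\<omega> (embed0 (\<lambda>y. f y * g y)) = \<omega> (embed0 f) * \<omega> (embed0 g)"
    using character_mult[OF character embed0_in_commutant00[OF creg f] embed0_in_commutant00[OF creg g]]
    by simp
next
  fix a and f :: "'a \<Rightarrow> complex"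
  assume f: "continuous_on UNIV f"
  have "embed0 (\<lambda>y. a * f y) = (\<lambda>k x. a * embed0 f k x)"
    by (auto simp: embed0_def)
  then show "\<omega> (embed0 (\<lambda>y. a * f y)) = a * \<omega> (embed0 f)"
    using character_scaleC[OF character embed0_in_commutant00[OF creg f]] by simp
qed (use character_one in auto)

text \<open>Writing \<psi> = |\<psi>|^(1/2) \<cdot> \<psi>/|\<psi>|^(1/2), the first factor lies in C(X) and vanishes at x.\<close>
lemma character_single_term_vanishing:
  assumes evaluation: "\<And>f. continuous_on UNIV f \<Longrightarrow> \<omega> (embed0 f) = f x"
    and single: "single_term k \<psi> \<in> commutant00 \<sigma>" and "\<psi> x = 0"
  shows "\<omega> (single_term k \<psi>) = 0"
proof -
  have \<psi>: "continuous_on UNIV \<psi>" "\<And>y. \<psi> y \<noteq> 0 \<Longrightarrow> zpow \<sigma> (- k) y = y"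
    using single by (auto simp: single_term_in_commutant00_iff[OF creg])
  define g where "g y = complex_of_real (sqrt (cmod (\<psi> y)))" for y
  define h where "h y = \<psi> y / g y" for y
  have g_cont: "continuous_on UNIV g" unfolding g_def using \<psi>(1) by (intro continuous_intros)
  have h_term: "single_term k h \<in> commutant00 \<sigma>"
    using continuous_on_divide_sqrt_norm[OF \<psi>(1)] \<psi>(2)
    by (auto simp: single_term_in_commutant00_iff[OF creg] h_def g_def)
  have "(\<lambda>y. g y * h y) = \<psi>" by (auto simp: g_def h_def fun_eq_iff)
  then have "\<omega> (single_term k \<psi>) = \<omega> (cmult \<sigma> (embed0 g) (single_term k h))"
    by (simp add: cmult_embed0_single_term)
  also have "\<dots> = \<omega> (embed0 g) * \<omega> (single_term k h)"
    by (rule character_mult[OF character embed0_in_commutant00[OF creg g_cont] h_term])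
  also have "\<omega> (embed0 g) = 0" using evaluation[OF g_cont] \<open>\<psi> x = 0\<close> by (simp add: g_def)
  finally show ?thesis by simp
qed

end

end

section \<open>Minimal periods and the functionals omega2\<close>

lemma minper_pos: "x \<in> Uper \<sigma> \<Longrightarrow> 1 \<le> minper \<sigma> x"
  and interior_Fix_minper: "x \<in> Uper \<sigma> \<Longrightarrow> x \<in> interior (Fix \<sigma> (minper \<sigma> x))"
proof -
  assume "x \<in> Uper \<sigma>"
  then obtain q where "1 \<le> q \<and> x \<in> interior (Fix \<sigma> q)" unfolding Uper_def by blast
  then have "1 \<le> minper \<sigma> x \<and> x \<in> interior (Fix \<sigma> (minper \<sigma> x))"
    unfolding minper_def by (rule LeastI)
  then show "1 \<le> minper \<sigma> x" "x \<in> interior (Fix \<sigma> (minper \<sigma> x))" by blast+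
qed

lemma minper_le: "1 \<le> m \<Longrightarrow> x \<in> interior (Fix \<sigma> m) \<Longrightarrow> minper \<sigma> x \<le> m"
  unfolding minper_def by (rule Least_le) blast

lemma minper_dvd:
  assumes x: "x \<in> Uper \<sigma>" and m: "1 \<le> m" "x \<in> interior (Fix \<sigma> m)"
  shows "minper \<sigma> x dvd m"
proof -
  let ?n = "minper \<sigma> x"
  have "Fix \<sigma> ?n \<inter> Fix \<sigma> m \<subseteq> Fix \<sigma> (gcd ?n m)"
    using funpow_fixed_gcd[where f=\<sigma> and a="?n" and b=m] minper_pos[OF x] unfolding Fix_def by auto
  moreover have "x \<in> interior (Fix \<sigma> ?n \<inter> Fix \<sigma> m)"
    using interior_Fix_minper[OF x] m(2) by (simp add: interior_Int)
  ultimately have "x \<in> interior (Fix \<sigma> (gcd ?n m))"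
    using interior_mono by blast
  moreover have "1 \<le> gcd ?n m" using minper_pos[OF x] by (simp add: Suc_le_eq)
  ultimately have "?n \<le> gcd ?n m" by (intro minper_le)
  moreover have "gcd ?n m \<le> ?n" using minper_pos[OF x] by (intro gcd_le1_nat) simp
  ultimately have "gcd ?n m = ?n" by (rule antisym[rotated])
  then show ?thesis using gcd_dvd2[of ?n m] by simp
qed

lemma finite_minper_multiples:
  assumes "x \<in> Uper \<sigma>" "F \<in> c00"
  shows "finite {j. F (j * int (minper \<sigma> x)) \<noteq> (\<lambda>y. 0)}"
proof -
  have "{j. F (j * int (minper \<sigma> x)) \<noteq> (\<lambda>y. 0)} = (\<lambda>j. j * int (minper \<sigma> x)) -` coeff_supp F"
    unfolding coeff_supp_def by auto
  moreover have "inj (\<lambda>j. j * int (minper \<sigma> x))"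
    using minper_pos[OF assms(1)] by (simp add: inj_def)
  ultimately show ?thesis
    using finite_vimageI[OF c00_finite_coeff_supp[OF assms(2)]] by simp
qed

lemma omega2_eq_sum_superset:
  assumes x: "x \<in> Uper \<sigma>" and F: "F \<in> c00" and T: "finite T"
    and vanish: "\<And>j. j \<notin> T \<Longrightarrow> F (j * int (minper \<sigma> x)) x = 0"
  shows "omega2 \<sigma> x c F = (\<Sum>j\<in>T. F (j * int (minper \<sigma> x)) x * c powi j)"
proof -
  let ?n = "int (minper \<sigma> x)"
  let ?A = "{j. F (j * ?n) \<noteq> (\<lambda>y. 0)}"
  have A: "finite ?A" by (rule finite_minper_multiples[OF x F])
  have "omega2 \<sigma> x c F = (\<Sum>j\<in>?A \<union> T. F (j * ?n) x * c powi j)"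
    unfolding omega2_def by (rule sum.mono_neutral_left) (use A T in auto)
  also have "\<dots> = (\<Sum>j\<in>T. F (j * ?n) x * c powi j)"
    using A T vanish by (intro sum.mono_neutral_right) auto
  finally show ?thesis .
qed

lemma sum_coeff_supp_multiples:
  fixes n :: int
  assumes "F \<in> c00" "0 < n"
  shows "(\<Sum>k\<in>coeff_supp F. if n dvd k then h k else 0) =
    (\<Sum>i\<in>{i. F (i * n) \<noteq> (\<lambda>y. 0)}. h (i * n))"
proof -
  have "{k \<in> coeff_supp F. n dvd k} = (\<lambda>i. i * n) ` {i. F (i * n) \<noteq> (\<lambda>y. 0)}"
    by (auto simp: coeff_supp_def mult.commute elim!: dvdE)
  moreover have "inj_on (\<lambda>i. i * n) {i. F (i * n) \<noteq> (\<lambda>y. 0)}"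
    using assms(2) by (simp add: inj_on_def)
  ultimately show ?thesis
    using c00_finite_coeff_supp[OF assms(1)] by (simp add: sum.inter_filter[symmetric] sum.reindex)
qed

lemma omega2_eq_sum_coeff_supp:
  assumes "x \<in> Uper \<sigma>" "F \<in> c00"
  shows "omega2 \<sigma> x c F = (\<Sum>k\<in>coeff_supp F.
    if int (minper \<sigma> x) dvd k then F k x * c powi (k div int (minper \<sigma> x)) else 0)"
proof -
  have n: "0 < int (minper \<sigma> x)" using minper_pos[OF assms(1)] by simp
  show ?thesis
    unfolding omega2_def
    using sum_coeff_supp_multiples[OF assms(2) n,
        where h="\<lambda>k. F k x * c powi (k div int (minper \<sigma> x))"] n
    by simp
qed

lemma sum_convolution_powi:
  fixes a b :: "int \<Rightarrow> 'b::field"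
  assumes A: "finite A" and B: "finite B" and "c \<noteq> 0" and b: "\<And>j. j \<notin> B \<Longrightarrow> b j = 0"
  shows "(\<Sum>m\<in>(\<lambda>(i, j). i + j) ` (A \<times> B). (\<Sum>i\<in>A. a i * b (m - i)) * c powi m)
       = (\<Sum>i\<in>A. a i * c powi i) * (\<Sum>j\<in>B. b j * c powi j)"
proof -
  define M where "M = (\<lambda>(i, j). i + j) ` (A \<times> B)"
  have M: "finite M" unfolding M_def using A B by simp
  have inner: "(\<Sum>m\<in>M. b (m - i) * c powi m) = c powi i * (\<Sum>j\<in>B. b j * c powi j)"
    if i: "i \<in> A" for i
  proof -
    have "(\<Sum>m\<in>M. b (m - i) * c powi m) = (\<Sum>j\<in>(\<lambda>m. m - i) ` M. b j * c powi (j + i))"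
      by (subst sum.reindex) (auto simp: inj_on_def)
    also have "\<dots> = (\<Sum>j\<in>B. b j * c powi (j + i))"
    proof (rule sum.mono_neutral_right)
      show "B \<subseteq> (\<lambda>m. m - i) ` M"
        unfolding M_def using i by (force intro: image_eqI[of _ _ "i + _"])
    qed (use M b in auto)
    also have "\<dots> = c powi i * (\<Sum>j\<in>B. b j * c powi j)"
      using \<open>c \<noteq> 0\<close> by (simp add: sum_distrib_left power_int_add algebra_simps)
    finally show ?thesis .
  qed
  have "(\<Sum>m\<in>M. (\<Sum>i\<in>A. a i * b (m - i)) * c powi m) = (\<Sum>i\<in>A. a i * (\<Sum>m\<in>M. b (m - i) * c powi m))"
    by (simp add: sum_distrib_left sum_distrib_right sum.swap[of _ M] mult.assoc)
  also have "\<dots> = (\<Sum>i\<in>A. a i * c powi i) * (\<Sum>j\<in>B. b j * c powi j)"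
    by (simp add: inner sum_distrib_right mult.assoc)
  finally show ?thesis unfolding M_def .
qed

lemma omega2_add:
  assumes x: "x \<in> Uper \<sigma>" and F: "F \<in> c00" and G: "G \<in> c00"
  shows "omega2 \<sigma> x c (\<lambda>k y. F k y + G k y) = omega2 \<sigma> x c F + omega2 \<sigma> x c G"
proof -
  let ?n = "int (minper \<sigma> x)"
  define T where "T = {j. F (j * ?n) \<noteq> (\<lambda>y. 0)} \<union> {j. G (j * ?n) \<noteq> (\<lambda>y. 0)}"
  have T: "finite T" unfolding T_def using finite_minper_multiples[OF x] F G by blast
  have vanish: "F (j * ?n) x = 0" "G (j * ?n) x = 0" if "j \<notin> T" for j
    using that unfolding T_def by auto
  have "omega2 \<sigma> x c (\<lambda>k y. F k y + G k y) = (\<Sum>j\<in>T. (F (j * ?n) x + G (j * ?n) x) * c powi j)"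
    by (rule omega2_eq_sum_superset[OF x c00_add[OF F G] T]) (simp add: vanish)
  also have "\<dots> = (\<Sum>j\<in>T. F (j * ?n) x * c powi j) + (\<Sum>j\<in>T. G (j * ?n) x * c powi j)"
    by (simp add: distrib_right sum.distrib)
  also have "\<dots> = omega2 \<sigma> x c F + omega2 \<sigma> x c G"
    using omega2_eq_sum_superset[OF x _ T] F G vanish by simp
  finally show ?thesis .
qed

lemma omega2_scaleC:
  assumes x: "x \<in> Uper \<sigma>" and F: "F \<in> c00"
  shows "omega2 \<sigma> x c (\<lambda>k y. a * F k y) = a * omega2 \<sigma> x c F"
proof -
  let ?n = "int (minper \<sigma> x)"
  have "omega2 \<sigma> x c (\<lambda>k y. a * F k y) = (\<Sum>j\<in>{j. F (j * ?n) \<noteq> (\<lambda>y. 0)}. a * F (j * ?n) x * c powi j)"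
    by (rule omega2_eq_sum_superset[OF x c00_scaleC[OF F] finite_minper_multiples[OF x F]]) auto
  then show ?thesis by (simp add: omega2_def sum_distrib_left mult.assoc)
qed

section \<open>The functionals omega1 and omega2 are characters\<close>

context
  fixes \<sigma> :: "'a::t2_space \<Rightarrow> 'a"
  assumes creg: "completely_regular_space (euclidean :: 'a topology)" and bij: "bij \<sigma>"
begin

lemma commutant00_nonzero_interior_Fix:
  assumes F: "F \<in> commutant00 \<sigma>" and "F k x \<noteq> 0"
  shows "x \<in> interior (Fix \<sigma> (nat \<bar>k\<bar>))"
proof -
  have "open {y. F k y \<noteq> 0}"
    using open_Collect_neq[OF c00_continuous[OF commutant00_in_c00[OF creg F]] continuous_on_const]
    by simp
  moreover have "{y. F k y \<noteq> 0} \<subseteq> Fix \<sigma> (nat \<bar>k\<bar>)"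
    using commutant00_fixed[OF creg F] zpow_neg_fixed_iff[OF bij] unfolding Fix_def by blast
  ultimately show ?thesis using assms(2) interior_maximal by blast
qed

lemma commutant00_nonzero_Uper:
  "F \<in> commutant00 \<sigma> \<Longrightarrow> F k x \<noteq> 0 \<Longrightarrow> k \<noteq> 0 \<Longrightarrow> x \<in> Uper \<sigma>"
  using commutant00_nonzero_interior_Fix unfolding Uper_def by force

lemma commutant00_minper_dvd:
  assumes "F \<in> commutant00 \<sigma>" "F k x \<noteq> 0" "x \<in> Uper \<sigma>"
  shows "int (minper \<sigma> x) dvd k"
proof (cases "k = 0")
  case False
  then have "minper \<sigma> x dvd nat \<bar>k\<bar>"
    using minper_dvd[OF assms(3) _ commutant00_nonzero_interior_Fix[OF assms(1,2)]] by simp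
  then have "int (minper \<sigma> x) dvd int (nat \<bar>k\<bar>)" by (simp only: int_dvd_int_iff)
  then show ?thesis by simp
qed simp

lemma omega1_is_character:
  assumes x: "x \<notin> Uper \<sigma>"
  shows "is_character \<sigma> (omega1 x)"
proof -
  have "omega1 x (cmult \<sigma> F G) = omega1 x F * omega1 x G"
    if F: "F \<in> commutant00 \<sigma>" for F G
  proof -
    have "cmult \<sigma> F G 0 x = (\<Sum>k\<in>coeff_supp F. if k = 0 then F 0 x * G 0 x else 0)"
      unfolding cmult_commutant00[OF creg F]
      using commutant00_nonzero_Uper[OF F] x by (intro sum.cong) auto
    also have "\<dots> = F 0 x * G 0 x"
      using c00_finite_coeff_supp[OF commutant00_in_c00[OF creg F]]
      by (simp add: sum.delta) (auto simp: coeff_supp_def)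
    finally show ?thesis unfolding omega1_def .
  qed
  then show ?thesis
    unfolding is_character_def using embed0_in_commutant00[OF creg continuous_on_const[of UNIV 1]]
    by (auto simp: omega1_def embed0_def intro!: bexI[of _ "embed0 (\<lambda>y. 1)"])
qed

lemma cmult_commutant00_at_minper_multiple:
  assumes F: "F \<in> commutant00 \<sigma>" and x: "x \<in> Uper \<sigma>"
  shows "cmult \<sigma> F G (m * int (minper \<sigma> x)) x =
    (\<Sum>i\<in>{i. F (i * int (minper \<sigma> x)) \<noteq> (\<lambda>y. 0)}.
       F (i * int (minper \<sigma> x)) x * G ((m - i) * int (minper \<sigma> x)) x)"
proof -
  let ?n = "int (minper \<sigma> x)"
  have "cmult \<sigma> F G (m * ?n) x = (\<Sum>k\<in>coeff_supp F. F k x * G (m * ?n - k) x)"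
    by (simp add: cmult_commutant00[OF creg F])
  also have "\<dots> = (\<Sum>k\<in>coeff_supp F. if ?n dvd k then F k x * G (m * ?n - k) x else 0)"
    using commutant00_minper_dvd[OF F _ x] by (intro sum.cong) auto
  also have "\<dots> = (\<Sum>i\<in>{i. F (i * ?n) \<noteq> (\<lambda>y. 0)}. F (i * ?n) x * G (m * ?n - i * ?n) x)"
    using minper_pos[OF x] by (intro sum_coeff_supp_multiples commutant00_in_c00[OF creg F]) simp
  finally show ?thesis by (simp add: left_diff_distrib)
qed

lemma omega2_mult:
  assumes x: "x \<in> Uper \<sigma>" and "c \<noteq> 0" and F: "F \<in> commutant00 \<sigma>" and G: "G \<in> commutant00 \<sigma>"
  shows "omega2 \<sigma> x c (cmult \<sigma> F G) = omega2 \<sigma> x c F * omega2 \<sigma> x c G"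
proof -
  let ?n = "int (minper \<sigma> x)"
  define A where "A H = {i. H (i * ?n) \<noteq> (\<lambda>y. 0)}" for H :: "int \<Rightarrow> 'a \<Rightarrow> complex"
  define M where "M = (\<lambda>(i, j). i + j) ` (A F \<times> A G)"
  have fin: "finite (A F)" "finite (A G)"
    unfolding A_def using finite_minper_multiples[OF x] F G commutant00_in_c00[OF creg] by blast+
  have vanish: "H (j * ?n) x = 0" if "j \<notin> A H" for H j
    using that unfolding A_def by auto
  have product: "cmult \<sigma> F G (m * ?n) x = (\<Sum>i\<in>A F. F (i * ?n) x * G ((m - i) * ?n) x)" for m
    unfolding A_def by (rule cmult_commutant00_at_minper_multiple[OF F x])
  have "omega2 \<sigma> x c (cmult \<sigma> F G) = (\<Sum>m\<in>M. cmult \<sigma> F G (m * ?n) x * c powi m)"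
  proof (rule omega2_eq_sum_superset[OF x cmult_commutant00_in_c00[OF creg F G]])
    show "finite M" unfolding M_def using fin by simp
    fix m assume "m \<notin> M"
    then have "m - i \<notin> A G" if "i \<in> A F" for i
      using that unfolding M_def by (auto intro: image_eqI[of _ _ "(i, m - i)"])
    then show "cmult \<sigma> F G (m * ?n) x = 0"
      unfolding product by (simp add: vanish)
  qed
  also have "\<dots> = (\<Sum>i\<in>A F. F (i * ?n) x * c powi i) * (\<Sum>j\<in>A G. G (j * ?n) x * c powi j)"
    unfolding product M_def using fin \<open>c \<noteq> 0\<close> vanish by (intro sum_convolution_powi)
  also have "\<dots> = omega2 \<sigma> x c F * omega2 \<sigma> x c G"
    unfolding omega2_def A_def ..
  finally show ?thesis .
qed

lemma omega2_single_term:
  assumes x: "x \<in> Uper \<sigma>" and "continuous_on UNIV f"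
  shows "omega2 \<sigma> x c (single_term (j * int (minper \<sigma> x)) f) = f x * c powi j"
proof -
  have "omega2 \<sigma> x c (single_term (j * int (minper \<sigma> x)) f)
      = (\<Sum>i\<in>{j}. single_term (j * int (minper \<sigma> x)) f (i * int (minper \<sigma> x)) x * c powi i)"
  proof (rule omega2_eq_sum_superset[OF x])
    show "single_term (j * int (minper \<sigma> x)) f \<in> c00"
      using assms(2) by (simp add: single_term_in_c00_iff)
  qed (use minper_pos[OF x] in \<open>auto simp: single_term_def\<close>)
  then show ?thesis by (simp add: single_term_def)
qed

lemma omega2_is_character:
  assumes x: "x \<in> Uper \<sigma>" and "c \<noteq> 0"
  shows "is_character \<sigma> (omega2 \<sigma> x c)"
proof -
  have "omega2 \<sigma> x c (embed0 (\<lambda>y. 1)) = 1"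
    using omega2_single_term[OF x continuous_on_const, of c 0 1] by (simp add: embed0_eq_single_term)
  then show ?thesis
    unfolding is_character_def
    using embed0_in_commutant00[OF creg continuous_on_const[of UNIV 1]] assms
    by (auto simp: omega2_add omega2_scaleC omega2_mult commutant00_in_c00[OF creg]
        intro!: bexI[of _ "embed0 (\<lambda>y. 1)"])
qed

end

section \<open>Every character is an omega1 or an omega2\<close>

lemma minper_bump:
  fixes \<sigma> :: "'a::topological_space \<Rightarrow> 'a"
  assumes "completely_regular_space (euclidean :: 'a topology)" "x \<in> Uper \<sigma>"
  obtains \<phi> :: "'a \<Rightarrow> complex"
  where "continuous_on UNIV \<phi>" "\<phi> x = 1" "\<And>y. \<phi> y \<noteq> 0 \<Longrightarrow> (\<sigma> ^^ minper \<sigma> x) y = y"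
proof -
  obtain \<phi> :: "'a \<Rightarrow> complex" where \<phi>: "continuous_on UNIV \<phi>" "\<phi> x = 1"
    "\<And>y. y \<notin> interior (Fix \<sigma> (minper \<sigma> x)) \<Longrightarrow> \<phi> y = 0"
    using completely_regular_bump[OF assms(1) open_interior interior_Fix_minper[OF assms(2)]] by blast
  have "(\<sigma> ^^ minper \<sigma> x) y = y" if "\<phi> y \<noteq> 0" for y
    using \<phi>(3) that interior_subset[of "Fix \<sigma> (minper \<sigma> x)"] unfolding Fix_def by blast
  with \<phi>(1,2) show ?thesis by (rule that)
qed

text \<open>When \<sigma>^n fixes the support of \<phi>, these multiply like the
  integer powers of \<phi> \<delta>^n, up to the factor \<phi>^2 \<delta>^0 in (\<phi> \<delta>^n)(\<phi> \<delta>^-n).\<close>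
definition bump_power :: "('a \<Rightarrow> complex) \<Rightarrow> nat \<Rightarrow> int \<Rightarrow> int \<Rightarrow> 'a \<Rightarrow> complex" where
  "bump_power \<phi> n j = single_term (j * int n) (\<lambda>y. \<phi> y ^ nat \<bar>j\<bar>)"

lemma bump_power_0: "bump_power \<phi> n 0 = embed0 (\<lambda>y. 1)"
  by (simp add: bump_power_def embed0_eq_single_term)

context
  fixes \<sigma> :: "'a::t2_space \<Rightarrow> 'a" and \<phi> :: "'a \<Rightarrow> complex" and n :: nat
  assumes creg: "completely_regular_space (euclidean :: 'a topology)" and bij: "bij \<sigma>"
    and \<phi>_cont: "continuous_on UNIV \<phi>" and \<phi>_periodic: "\<And>y. \<phi> y \<noteq> 0 \<Longrightarrow> (\<sigma> ^^ n) y = y"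
begin

lemma bump_zpow_fixed: "\<phi> y \<noteq> 0 \<Longrightarrow> zpow \<sigma> (- (j * int n)) y = y"
  by (rule zpow_neg_fixed_mult[OF bij \<phi>_periodic])

lemma bump_power_in_commutant00: "bump_power \<phi> n j \<in> commutant00 \<sigma>"
  unfolding bump_power_def single_term_in_commutant00_iff[OF creg]
  using \<phi>_cont bump_zpow_fixed by (auto intro!: continuous_intros)

lemma cmult_bump_power:
  assumes "0 \<le> i * j"
  shows "cmult \<sigma> (bump_power \<phi> n i) (bump_power \<phi> n j) = bump_power \<phi> n (i + j)"
proof -
  have "\<phi> y ^ nat \<bar>i\<bar> * \<phi> (zpow \<sigma> (- (i * int n)) y) ^ nat \<bar>j\<bar> = \<phi> y ^ nat \<bar>i + j\<bar>" for y
  proof (cases "\<phi> y = 0")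
    case False
    have "nat \<bar>i\<bar> + nat \<bar>j\<bar> = nat \<bar>i + j\<bar>"
      using assms by (cases "0 \<le> i") (auto simp: zero_le_mult_iff)
    then show ?thesis using bump_zpow_fixed[OF False] by (simp add: power_add[symmetric])
  next
    case True
    then show ?thesis using assms by (cases "i = 0") (auto simp: zero_le_mult_iff power_0_left)
  qed
  then show ?thesis
    unfolding bump_power_def cmult_single_terms by (simp add: algebra_simps)
qed

lemma cmult_bump_power_1_minus_1:
  "cmult \<sigma> (bump_power \<phi> n 1) (bump_power \<phi> n (- 1)) = embed0 (\<lambda>y. \<phi> y * \<phi> y)"
proof -
  have "(\<lambda>y. \<phi> y * \<phi> (zpow \<sigma> (- (1 * int n)) y)) = (\<lambda>y. \<phi> y * \<phi> y)"
    using bump_zpow_fixed[of _ 1] by (metis mult_zero_left)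
  then show ?thesis by (simp add: bump_power_def cmult_single_terms embed0_eq_single_term)
qed

lemma character_bump_power:
  assumes character: "is_character \<sigma> \<omega>" and "\<phi> x = 1"
    and evaluation: "\<And>f. continuous_on UNIV f \<Longrightarrow> \<omega> (embed0 f) = f x"
  obtains c where "c \<noteq> 0" "\<And>j. \<omega> (bump_power \<phi> n j) = c powi j"
proof -
  let ?P = "bump_power \<phi> n"
  define c where "c = \<omega> (?P 1)"
  define c' where "c' = \<omega> (?P (- 1))"
  have power_step: "\<omega> (?P (s * int (Suc m))) = \<omega> (?P (s * int m)) * \<omega> (?P s)"
    if "s = 1 \<or> s = - 1" for s m
  proof -
    have "?P (s * int (Suc m)) = cmult \<sigma> (?P (s * int m)) (?P s)"
      using cmult_bump_power[of "s * int m" s] that by (auto simp: algebra_simps)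
    then show ?thesis
      by (simp add: character_mult[OF character bump_power_in_commutant00 bump_power_in_commutant00])
  qed
  have powers: "\<omega> (?P (s * int m)) = \<omega> (?P s) ^ m" if "s = 1 \<or> s = - 1" for s m
  proof (induction m)
    case 0
    then show ?case by (simp add: bump_power_0 character_one[OF creg character])
  next
    case (Suc m)
    then show ?case using power_step[OF that] by simp
  qed
  have "c * c' = 1"
    using character_mult[OF character bump_power_in_commutant00 bump_power_in_commutant00, of 1 "- 1"]
      cmult_bump_power_1_minus_1 evaluation[of "\<lambda>y. \<phi> y * \<phi> y"] \<phi>_cont \<open>\<phi> x = 1\<close>
    by (simp add: c_def c'_def continuous_on_mult)
  then have "c \<noteq> 0" and c': "c' = inverse c" by (auto simp: inverse_unique)
  have "\<omega> (?P j) = c powi j" for j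
  proof (cases "0 \<le> j")
    case True
    then show ?thesis using powers[of 1 "nat j"] by (simp add: c_def power_int_def)
  next
    case False
    then show ?thesis
      using powers[of "- 1" "nat (- j)"] by (simp add: c'_def[symmetric] c' power_int_def power_inverse)
  qed
  with \<open>c \<noteq> 0\<close> show ?thesis by (rule that)
qed

end

context
  fixes \<sigma> :: "'a::t2_space \<Rightarrow> 'a" and \<omega> and x
  assumes creg: "completely_regular_space (euclidean :: 'a topology)" and bij: "bij \<sigma>"
    and character: "is_character \<sigma> \<omega>"
    and evaluation: "\<And>f. continuous_on UNIV f \<Longrightarrow> \<omega> (embed0 f) = f x"
begin

text \<open>Both sides equal \<omega> of F_k u \<delta>^k, computed as (F_k \<delta>^k)(u \<delta>^0) and as (F_k \<delta>^0)(u \<delta>^k).\<close>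
lemma character_single_term_factor:
  assumes F: "F \<in> commutant00 \<sigma>" and u: "continuous_on UNIV u" "u x = 1"
    and u_term: "single_term k u \<in> commutant00 \<sigma>"
  shows "\<omega> (single_term k (F k)) = F k x * \<omega> (single_term k u)"
proof -
  have "(\<lambda>y. F k y * u (zpow \<sigma> (- k) y)) = (\<lambda>y. F k y * u y)"
  proof
    show "F k y * u (zpow \<sigma> (- k) y) = F k y * u y" for y
      by (cases "F k y = 0") (simp_all add: commutant00_fixed[OF creg F])
  qed
  then have swap: "cmult \<sigma> (single_term k (F k)) (embed0 u) = cmult \<sigma> (embed0 (F k)) (single_term k u)"
    by (simp add: embed0_eq_single_term cmult_single_terms)
  have "\<omega> (single_term k (F k)) = \<omega> (single_term k (F k)) * \<omega> (embed0 u)"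
    using evaluation[OF u(1)] u(2) by simp
  also have "\<dots> = \<omega> (cmult \<sigma> (embed0 (F k)) (single_term k u))"
    unfolding swap[symmetric] using F u(1)
    by (simp add: character_mult[OF character] single_term_coeff_in_commutant00[OF creg]
        embed0_in_commutant00[OF creg])
  also have "\<dots> = F k x * \<omega> (single_term k u)"
    using F u_term evaluation
    by (simp add: character_mult[OF character] embed0_in_commutant00[OF creg]
        c00_continuous commutant00_in_c00[OF creg])
  finally show ?thesis .
qed

lemma character_eq_omega1:
  assumes x: "x \<notin> Uper \<sigma>" and F: "F \<in> commutant00 \<sigma>"
  shows "\<omega> F = omega1 x F"
proof -
  have "\<omega> (single_term k (F k)) = (if k = 0 then F 0 x else 0)" for k
  proof (cases "k = 0")
    case True
    then show ?thesis
      using evaluation c00_continuous[OF commutant00_in_c00[OF creg F]]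
      by (simp add: embed0_eq_single_term)
  next
    case False
    then have "F k x = 0" using commutant00_nonzero_Uper[OF creg bij F] x by blast
    then show ?thesis
      using character_single_term_vanishing[OF creg character evaluation
          single_term_coeff_in_commutant00[OF creg F]] False by simp
  qed
  then have "\<omega> F = (\<Sum>k\<in>coeff_supp F. if k = 0 then F 0 x else 0)"
    by (simp add: character_eq_sum_single_terms[OF creg character F])
  also have "\<dots> = F 0 x"
    using c00_finite_coeff_supp[OF commutant00_in_c00[OF creg F]]
    by (simp add: sum.delta) (auto simp: coeff_supp_def)
  finally show ?thesis unfolding omega1_def .
qed

lemma character_eq_omega2:
  assumes x: "x \<in> Uper \<sigma>"
  obtains c where "c \<noteq> 0" "\<And>F. F \<in> commutant00 \<sigma> \<Longrightarrow> \<omega> F = omega2 \<sigma> x c F"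
proof -
  let ?n = "minper \<sigma> x"
  obtain \<phi> :: "'a \<Rightarrow> complex"
    where \<phi>: "continuous_on UNIV \<phi>" "\<phi> x = 1" "\<And>y. \<phi> y \<noteq> 0 \<Longrightarrow> (\<sigma> ^^ ?n) y = y"
    using minper_bump[OF creg x] by blast
  obtain c where c: "c \<noteq> 0" "\<And>j. \<omega> (bump_power \<phi> ?n j) = c powi j"
    using character_bump_power[OF creg bij \<phi>(1,3) character \<phi>(2) evaluation] by blast
  have single: "\<omega> (single_term k (F k)) =
      (if int ?n dvd k then F k x * c powi (k div int ?n) else 0)" if F: "F \<in> commutant00 \<sigma>" for F k
  proof (cases "F k x = 0")
    case True
    then show ?thesis
      using character_single_term_vanishing[OF creg character evaluation
          single_term_coeff_in_commutant00[OF creg F]] by simp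
  next
    case False
    from commutant00_minper_dvd[OF creg bij F False x] obtain j where "k = int ?n * j"
      by (rule dvdE)
    then have k: "k = j * int ?n" by (simp add: mult.commute)
    have u: "continuous_on UNIV (\<lambda>y. \<phi> y ^ nat \<bar>j\<bar>)" using \<phi>(1) by (intro continuous_intros)
    have "\<omega> (single_term k (F k)) = F k x * \<omega> (bump_power \<phi> ?n j)"
      using character_single_term_factor[OF F u _ bump_power_in_commutant00[OF creg bij \<phi>(1,3), of j,
          unfolded bump_power_def k[symmetric]]] \<phi>(2)
      by (simp add: bump_power_def k)
    moreover have "k div int ?n = j" using k minper_pos[OF x] by simp
    ultimately show ?thesis using c(2) k by simp
  qed
  have "\<omega> F = omega2 \<sigma> x c F" if F: "F \<in> commutant00 \<sigma>" for F
    unfolding character_eq_sum_single_terms[OF creg character F]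
      omega2_eq_sum_coeff_supp[OF x commutant00_in_c00[OF creg F]]
    by (rule sum.cong[OF refl single[OF F]])
  with c(1) show ?thesis by (rule that)
qed

end

lemma character_classification:
  fixes \<sigma> :: "'a::t2_space \<Rightarrow> 'a"
  assumes compact: "compact (UNIV :: 'a set)" and bij: "bij \<sigma>" and character: "is_character \<sigma> \<omega>"
  shows "(\<exists>x. x \<notin> Uper \<sigma> \<and> (\<forall>F\<in>commutant00 \<sigma>. \<omega> F = omega1 x F))
       \<or> (\<exists>x c. x \<in> Uper \<sigma> \<and> c \<noteq> 0 \<and> (\<forall>F\<in>commutant00 \<sigma>. \<omega> F = omega2 \<sigma> x c F))"
proof -
  note creg = compact_t2_completely_regular[OF compact]
  obtain x where evaluation: "\<And>f. continuous_on UNIV f \<Longrightarrow> \<omega> (embed0 f) = f x"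
    using character_embed0_evaluation[OF creg character compact] by blast
  show ?thesis
  proof (cases "x \<in> Uper \<sigma>")
    case True
    then obtain c where "c \<noteq> 0" "\<And>F. F \<in> commutant00 \<sigma> \<Longrightarrow> \<omega> F = omega2 \<sigma> x c F"
      using character_eq_omega2[OF creg bij character evaluation] by blast
    with True show ?thesis by blast
  next
    case False
    then show ?thesis using character_eq_omega1[OF creg bij character evaluation] by blast
  qed
qed

section \<open>Distinctness\<close>

lemma omega1_inject:
  fixes \<sigma> :: "'a::t2_space \<Rightarrow> 'a"
  assumes creg: "completely_regular_space (euclidean :: 'a topology)"
    and "\<forall>F\<in>commutant00 \<sigma>. omega1 x F = omega1 y F"
  shows "x = y"
proof (rule ccontr)
  assume "x \<noteq> y"
  then obtain f :: "'a \<Rightarrow> complex" where "continuous_on UNIV f" "f x \<noteq> f y"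
    by (rule completely_regular_separating[OF creg])
  moreover have "omega1 x (embed0 f) = omega1 y (embed0 f)"
    using assms(2) embed0_in_commutant00[OF creg \<open>continuous_on UNIV f\<close>] by blast
  ultimately show False by (simp add: omega1_def embed0_def)
qed

context
  fixes \<sigma> :: "'a::t2_space \<Rightarrow> 'a"
  assumes creg: "completely_regular_space (euclidean :: 'a topology)" and bij: "bij \<sigma>"
begin

lemma minper_single_term_bump:
  assumes "x \<in> Uper \<sigma>"
  obtains \<phi> where "single_term (int (minper \<sigma> x)) \<phi> \<in> commutant00 \<sigma>"
    "continuous_on UNIV \<phi>" "\<phi> x = 1"
proof -
  obtain \<phi> :: "'a \<Rightarrow> complex" where \<phi>: "continuous_on UNIV \<phi>" "\<phi> x = 1"
    "\<And>y. \<phi> y \<noteq> 0 \<Longrightarrow> (\<sigma> ^^ minper \<sigma> x) y = y"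
    using minper_bump[OF creg assms] by blast
  have "single_term (int (minper \<sigma> x)) \<phi> = bump_power \<phi> (minper \<sigma> x) 1"
    by (simp add: bump_power_def)
  then show ?thesis
    using bump_power_in_commutant00[OF creg bij \<phi>(1,3)] \<phi>(1,2) by (intro that[of \<phi>]) auto
qed

lemma omega1_ne_omega2:
  assumes "y \<in> Uper \<sigma>" "c \<noteq> 0"
  shows "\<not> (\<forall>F\<in>commutant00 \<sigma>. omega1 x F = omega2 \<sigma> y c F)"
proof
  assume same: "\<forall>F\<in>commutant00 \<sigma>. omega1 x F = omega2 \<sigma> y c F"
  obtain \<phi> where \<phi>: "single_term (int (minper \<sigma> y)) \<phi> \<in> commutant00 \<sigma>"
    "continuous_on UNIV \<phi>" "\<phi> y = 1"
    by (rule minper_single_term_bump[OF assms(1)])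
  have "omega1 x (single_term (int (minper \<sigma> y)) \<phi>) = 0"
    using minper_pos[OF assms(1)] by (simp add: omega1_def single_term_def)
  moreover have "omega2 \<sigma> y c (single_term (int (minper \<sigma> y)) \<phi>) = c"
    using omega2_single_term[OF creg bij assms(1) \<phi>(2), of c 1] \<phi>(3) by simp
  moreover have "omega1 x (single_term (int (minper \<sigma> y)) \<phi>) = omega2 \<sigma> y c (single_term (int (minper \<sigma> y)) \<phi>)"
    using same \<phi>(1) by blast
  ultimately show False using assms(2) by simp
qed

lemma omega2_inject:
  assumes x: "x \<in> Uper \<sigma>" and y: "y \<in> Uper \<sigma>"
    and same: "\<forall>F\<in>commutant00 \<sigma>. omega2 \<sigma> x c F = omega2 \<sigma> y d F"
  shows "x = y \<and> c = d"
proof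
  have evaluation: "omega2 \<sigma> z e (embed0 f) = f z" if "z \<in> Uper \<sigma>" "continuous_on UNIV f" for z e f
    using omega2_single_term[OF creg bij that, of e 0] by (simp add: embed0_eq_single_term)
  show "x = y"
  proof (rule ccontr)
    assume "x \<noteq> y"
    then obtain f :: "'a \<Rightarrow> complex" where f: "continuous_on UNIV f" "f x \<noteq> f y"
      by (rule completely_regular_separating[OF creg])
    have "omega2 \<sigma> x c (embed0 f) = omega2 \<sigma> y d (embed0 f)"
      using same embed0_in_commutant00[OF creg f(1)] by blast
    then show False using evaluation[OF x f(1)] evaluation[OF y f(1)] f(2) by simp
  qed
  obtain \<phi> where \<phi>: "single_term (int (minper \<sigma> x)) \<phi> \<in> commutant00 \<sigma>"
    "continuous_on UNIV \<phi>" "\<phi> x = 1"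
    by (rule minper_single_term_bump[OF x])
  have "omega2 \<sigma> x c (single_term (int (minper \<sigma> x)) \<phi>) = omega2 \<sigma> x d (single_term (int (minper \<sigma> x)) \<phi>)"
    using same \<phi>(1) \<open>x = y\<close> by blast
  then show "c = d"
    using omega2_single_term[OF creg bij x \<phi>(2), of _ 1] \<phi>(3) by simp
qed

end

theorem lemma3p6:
  fixes \<sigma> \<sigma>' :: "'a::t2_space \<Rightarrow> 'a"
  assumes "compact (UNIV :: 'a set)"
    and "homeomorphism UNIV UNIV \<sigma> \<sigma>'"
  shows "(\<forall>x. x \<notin> Uper \<sigma> \<longrightarrow> is_character \<sigma> (omega1 x))
    \<and> (\<forall>x c. x \<in> Uper \<sigma> \<and> c \<noteq> 0 \<longrightarrow> is_character \<sigma> (omega2 \<sigma> x c))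
    \<and> (\<forall>\<omega>. is_character \<sigma> \<omega> \<longrightarrow>
         (\<exists>x. x \<notin> Uper \<sigma> \<and> (\<forall>F\<in>commutant00 \<sigma>. \<omega> F = omega1 x F))
       \<or> (\<exists>x c. x \<in> Uper \<sigma> \<and> c \<noteq> 0 \<and> (\<forall>F\<in>commutant00 \<sigma>. \<omega> F = omega2 \<sigma> x c F)))
    \<and> (\<forall>x y. x \<notin> Uper \<sigma> \<and> y \<notin> Uper \<sigma> \<and>
         (\<forall>F\<in>commutant00 \<sigma>. omega1 x F = omega1 y F) \<longrightarrow> x = y)
    \<and> (\<forall>x y c. x \<notin> Uper \<sigma> \<and> y \<in> Uper \<sigma> \<and> c \<noteq> 0 \<longrightarrow>
         \<not> (\<forall>F\<in>commutant00 \<sigma>. omega1 x F = omega2 \<sigma> y c F))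
    \<and> (\<forall>x y c d. x \<in> Uper \<sigma> \<and> y \<in> Uper \<sigma> \<and> c \<noteq> 0 \<and> d \<noteq> 0 \<and>
         (\<forall>F\<in>commutant00 \<sigma>. omega2 \<sigma> x c F = omega2 \<sigma> y d F) \<longrightarrow> x = y \<and> c = d)"
proof -
  have creg: "completely_regular_space (euclidean :: 'a topology)"
    by (rule compact_t2_completely_regular[OF assms(1)])
  have bij: "bij \<sigma>"
    using homeomorphism_apply1[OF assms(2)] homeomorphism_apply2[OF assms(2)]
    by (intro o_bij[where g = \<sigma>']) (auto simp: fun_eq_iff)
  show ?thesis
    using omega1_is_character[OF creg bij] omega2_is_character[OF creg bij]
      character_classification[OF assms(1) bij] omega1_inject[OF creg]
      omega1_ne_omega2[OF creg bij] omega2_inject[OF creg bij]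
    by blast
qed

end
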